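(* Let $a$ and $b$ be relatively prime integers with $1<a<b$, let $(u,v)$ be the definitely least solution of $ax+by=1$, and let $S=\langle a,b\rangle$. Then the number of indices $i\in\{1,\dots,a-1\}$ with $I_{i,a}(S)\neq\varnothing$ is $|v|$, i.e. $\#\{I_{i,a}(S): I_{i,a}(S)\neq\varnothing,\ i\in[1,a-1]\}=|v|$.
   Context: $\langle a,b\rangle=\{\lambda_1a+\lambda_2b:\lambda_1,\lambda_2\in\mathbb{N}\}$. $I(S)$ is the set of isolated gaps of $S$ ($x\in\mathbb{N}\setminus S$ with $x-1,x+1\in S$), and $I_{i,a}(S)=\{s\in I(S):s\equiv i\pmod a\}$. The definitely least solution $(u,v)$ of $ax+by=1$ is the unique integer solution with $|u|,|v|$ minimal; equivalently the one with $|u|\le b/2$, $|v|\le a/2$. *)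

theory Defs
  imports "HOL-Number_Theory.Cong"
begin

definition gen2 :: "nat \<Rightarrow> nat \<Rightarrow> nat set" where
  "gen2 a b = {l1 * a + l2 * b | l1 l2. True}"

definition isolated_gaps :: "nat set \<Rightarrow> nat set" where
  "isolated_gaps S = {x. x \<notin> S \<and> 0 < x \<and> x - 1 \<in> S \<and> x + 1 \<in> S}"

definition isolated_gaps_res :: "nat \<Rightarrow> nat \<Rightarrow> nat set \<Rightarrow> nat set" where
  "isolated_gaps_res i a S = {s \<in> isolated_gaps S. [s = i] (mod a)}"

definition definitely_least_solution :: "int \<Rightarrow> int \<Rightarrow> int \<Rightarrow> int \<Rightarrow> bool" where
  "definitely_least_solution a b u v \<longleftrightarrow>
     a * u + b * v = 1 \<and> 2 * \<bar>u\<bar> \<le> \<bar>b\<bar> \<and> 2 * \<bar>v\<bar> \<le> \<bar>a\<bar>"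

end

theory Submission
  imports Defs
begin

text \<open>Let c \<in> [1, a-1] be the inverse of b modulo a and \<rho>(x) = x c mod a. An element
  x lies in S = \<langle>a,b\<rangle> iff \<rho>(x) b \<le> x, so \<rho>(r) b is the least element of S congruent to r.
  Hence the class of i contains an isolated gap iff \<rho>(i-1) < \<rho>(i) > \<rho>(i+1), the gap
  being \<rho>(i) b - a; as \<rho>(i \<plusminus> 1) = \<rho>(i) \<plusminus> c mod a, this means \<rho>(i) \<ge> max c (a-c).
  Since \<rho> permutes [1, a-1], there are min c (a-c) such classes, and min c (a-c) = |v|
  because v \<equiv> c (mod a) and |v| \<le> a/2.\<close>

locale inverse_mod_pair =
  fixes a b c :: nat
  assumes one_less_a: "1 < a" and a_less_b: "a < b"
    and c_less_a: "c < a" and b_times_c: "(b * c) mod a = 1"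
begin

text \<open>This is the map \<rho> above: bcoeff r * b is the Apery element of S for the residue r.\<close>

definition bcoeff :: "nat \<Rightarrow> nat" where
  "bcoeff x = (x * c) mod a"

lemma c_pos: "0 < c"
  using b_times_c by (cases c) auto

lemma bcoeff_less: "bcoeff x < a"
  unfolding bcoeff_def using one_less_a by simp

lemma bcoeff_cong: "[x = y] (mod a) \<Longrightarrow> bcoeff x = bcoeff y"
  unfolding bcoeff_def cong_def by (metis mod_mult_left_eq)

lemma bcoeff_Suc: "bcoeff (Suc x) = (bcoeff x + c) mod a"
  unfolding bcoeff_def by (simp add: algebra_simps mod_add_right_eq)

lemma bcoeff_mult_b: "bcoeff (y * b) = y mod a"
proof -
  have "bcoeff (y * b) = (y * (b * c)) mod a"
    unfolding bcoeff_def by (simp add: ac_simps)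
  also have "\<dots> = y mod a"
    using b_times_c by (metis mod_mult_right_eq mult.right_neutral)
  finally show ?thesis .
qed

lemma bcoeff_times_b_cong: "[bcoeff x * b = x] (mod a)"
proof -
  have "[bcoeff x * b = x * (b * c)] (mod a)"
    unfolding bcoeff_def cong_def by (metis mod_mult_left_eq mult.assoc mult.commute)
  also have "[x * (b * c) = x] (mod a)"
    using b_times_c unfolding cong_def by (metis mod_mult_right_eq mult.right_neutral)
  finally show ?thesis .
qed

lemma mem_gen2_iff: "x \<in> gen2 a b \<longleftrightarrow> bcoeff x * b \<le> x"
proof
  assume "x \<in> gen2 a b"
  then obtain l1 l2 where x: "x = l1 * a + l2 * b"
    unfolding gen2_def by blast
  then have "[x = l2 * b] (mod a)"
    unfolding cong_def by simp
  then have "bcoeff x = l2 mod a"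
    using bcoeff_cong bcoeff_mult_b by simp
  then have "bcoeff x * b \<le> l2 * b"
    by simp
  also have "\<dots> \<le> x"
    using x by simp
  finally show "bcoeff x * b \<le> x" .
next
  assume le: "bcoeff x * b \<le> x"
  then have "a dvd x - bcoeff x * b"
    using cong_sym[OF bcoeff_times_b_cong[of x]] by (simp add: cong_altdef_nat)
  then obtain l where "x - bcoeff x * b = a * l" ..
  then have "x = l * a + bcoeff x * b"
    using le by (simp add: algebra_simps)
  then show "x \<in> gen2 a b"
    unfolding gen2_def by blast
qed

lemma bcoeff_Suc_less_iff: "bcoeff (Suc x) < bcoeff x \<longleftrightarrow> a \<le> bcoeff x + c"
  using bcoeff_less[of x] c_pos c_less_a
  by (auto simp: bcoeff_Suc mod_if)

lemma bcoeff_less_Suc_iff: "bcoeff x < bcoeff (Suc x) \<longleftrightarrow> c \<le> bcoeff (Suc x)"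
  using bcoeff_less[of x] c_pos c_less_a
  by (auto simp: bcoeff_Suc mod_if)

lemma bcoeff_Suc_neq: "bcoeff (Suc x) \<noteq> bcoeff x"
  using bcoeff_less[of x] c_pos c_less_a
  by (auto simp: bcoeff_Suc mod_if)

lemma isolated_gap_bcoeff_less:
  assumes "x \<in> isolated_gaps (gen2 a b)"
  shows "bcoeff (x - 1) < bcoeff x" and "bcoeff (Suc x) < bcoeff x"
proof -
  have gap: "x < bcoeff x * b" and pred: "bcoeff (x - 1) * b \<le> x - 1"
    and succ: "bcoeff (Suc x) * b \<le> Suc x"
    using assms unfolding isolated_gaps_def mem_gen2_iff by auto
  from gap pred have "bcoeff (x - 1) * b < bcoeff x * b"
    by linarith
  then show "bcoeff (x - 1) < bcoeff x"
    by simp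
  from gap succ have "bcoeff (Suc x) * b \<le> bcoeff x * b"
    by linarith
  then show "bcoeff (Suc x) < bcoeff x"
    using bcoeff_Suc_neq[of x] a_less_b by simp
qed

lemma apery_minus_a_isolated_gap:
  assumes "0 < i" and pred: "bcoeff (i - 1) < bcoeff i" and succ: "bcoeff (Suc i) < bcoeff i"
  shows "bcoeff i * b - a \<in> isolated_gaps_res i a (gen2 a b)"
proof -
  define g where "g = bcoeff i * b - a"
  have "b \<le> bcoeff i * b"
    using pred by simp
  then have "a < bcoeff i * b"
    using a_less_b by linarith
  then have g_pos: "0 < g" and g_plus_a: "g + a = bcoeff i * b"
    unfolding g_def by auto
  have g_cong: "[g = i] (mod a)"
    using bcoeff_times_b_cong[of i] g_plus_a by (metis cong_def mod_add_self2)
  have "bcoeff (g - 1) = bcoeff (i - 1)"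
    using cong_diff_nat[OF g_cong cong_refl, of 1] g_pos \<open>0 < i\<close> by (intro bcoeff_cong) simp
  moreover have "bcoeff (i - 1) * b + b \<le> bcoeff i * b"
    using pred by (metis Suc_leI mult_Suc mult_le_mono1 add.commute)
  ultimately have pred_mem: "g - 1 \<in> gen2 a b"
    using g_plus_a a_less_b by (simp add: mem_gen2_iff)
  have "bcoeff (Suc g) = bcoeff (Suc i)"
    using g_cong cong_add_rcancel_nat[of g 1 i a] by (intro bcoeff_cong) simp
  moreover have "bcoeff (Suc i) * b + b \<le> bcoeff i * b"
    using succ by (metis Suc_leI mult_Suc mult_le_mono1 add.commute)
  ultimately have succ_mem: "g + 1 \<in> gen2 a b"
    using g_plus_a a_less_b by (simp add: mem_gen2_iff)
  have "g \<notin> gen2 a b"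
    using bcoeff_cong[OF g_cong] g_plus_a one_less_a by (simp add: mem_gen2_iff)
  with pred_mem succ_mem show ?thesis
    unfolding isolated_gaps_res_def isolated_gaps_def g_def[symmetric] using g_pos g_cong by auto
qed

lemma isolated_gaps_res_nonempty_iff:
  assumes "0 < i"
  shows "isolated_gaps_res i a (gen2 a b) \<noteq> {} \<longleftrightarrow> c \<le> bcoeff i \<and> a \<le> bcoeff i + c"
proof -
  have "isolated_gaps_res i a (gen2 a b) \<noteq> {} \<longleftrightarrow>
      bcoeff (i - 1) < bcoeff i \<and> bcoeff (Suc i) < bcoeff i"
  proof
    assume "isolated_gaps_res i a (gen2 a b) \<noteq> {}"
    then obtain x where x: "x \<in> isolated_gaps (gen2 a b)" and x_cong: "[x = i] (mod a)"
      unfolding isolated_gaps_res_def by blast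
    have "0 < x"
      using x unfolding isolated_gaps_def by simp
    then have "bcoeff (x - 1) = bcoeff (i - 1)"
      using cong_diff_nat[OF x_cong cong_refl, of 1] assms by (intro bcoeff_cong) simp
    moreover have "bcoeff (Suc x) = bcoeff (Suc i)"
      using x_cong cong_add_rcancel_nat[of x 1 i a] by (intro bcoeff_cong) simp
    ultimately show "bcoeff (i - 1) < bcoeff i \<and> bcoeff (Suc i) < bcoeff i"
      using isolated_gap_bcoeff_less[OF x] bcoeff_cong[OF x_cong] by simp
  next
    assume "bcoeff (i - 1) < bcoeff i \<and> bcoeff (Suc i) < bcoeff i"
    then show "isolated_gaps_res i a (gen2 a b) \<noteq> {}"
      using apery_minus_a_isolated_gap[OF assms] by (metis empty_iff)
  qed
  also have "\<dots> \<longleftrightarrow> c \<le> bcoeff i \<and> a \<le> bcoeff i + c"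
  proof -
    have "Suc (i - 1) = i"
      using assms by simp
    then show ?thesis
      using bcoeff_less_Suc_iff[of "i - 1"] bcoeff_Suc_less_iff[of i] by simp
  qed
  finally show ?thesis .
qed

lemma bij_betw_bcoeff: "bij_betw bcoeff {1..a-1} {1..a-1}"
proof -
  have "inj_on bcoeff {1..a-1}"
  proof
    fix x y
    assume x: "x \<in> {1..a-1}" and y: "y \<in> {1..a-1}" and "bcoeff x = bcoeff y"
    then have "[x = y] (mod a)"
      using bcoeff_times_b_cong by (metis cong_sym cong_trans)
    moreover have "x < a" and "y < a"
      using x y by auto
    ultimately show "x = y"
      by (simp add: cong_def)
  qed
  moreover have "bcoeff ` {1..a-1} \<subseteq> {1..a-1}"
  proof
    fix k
    assume "k \<in> bcoeff ` {1..a-1}"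
    then obtain x where x: "x \<in> {1..a-1}" and k: "k = bcoeff x" ..
    have "bcoeff x \<noteq> 0"
    proof
      assume "bcoeff x = 0"
      moreover have "x < a"
        using x by auto
      ultimately show False
        using bcoeff_times_b_cong[of x] x by (simp add: cong_def)
    qed
    then show "k \<in> {1..a-1}"
      using bcoeff_less[of x] k by simp
  qed
  ultimately show ?thesis
    unfolding bij_betw_def using endo_inj_surj by blast
qed

lemma card_isolated_gap_residues:
  "card {i \<in> {1..a-1}. isolated_gaps_res i a (gen2 a b) \<noteq> {}} = min c (a - c)"
proof -
  have "card {i \<in> {1..a-1}. isolated_gaps_res i a (gen2 a b) \<noteq> {}}
      = card {i \<in> {1..a-1}. c \<le> bcoeff i \<and> a \<le> bcoeff i + c}"
    by (intro arg_cong[where f = card] Collect_cong conj_cong refl isolated_gaps_res_nonempty_iff) auto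
  also have "\<dots> = card {k \<in> {1..a-1}. c \<le> k \<and> a \<le> k + c}"
    by (rule bij_betw_same_card[OF bij_betw_Collect[OF bij_betw_bcoeff]]) simp
  also have "\<dots> = card {max c (a - c)..a-1}"
    using c_pos c_less_a by (intro arg_cong[where f = card]) auto
  also have "\<dots> = min c (a - c)"
    using c_pos c_less_a by auto
  finally show ?thesis .
qed

end

lemma bezout_coeff_inverse_mod:
  fixes a b :: nat and u v :: int
  assumes "1 < a" and "int a * u + int b * v = 1"
  shows "(b * nat (v mod int a)) mod a = 1"
proof -
  have "int ((b * nat (v mod int a)) mod a) = (int b * v) mod int a"
    using assms(1) by (simp add: zmod_int mod_mult_right_eq)
  also have "\<dots> = (1 - int a * u) mod int a"
    using assms(2) by (metis add_diff_cancel_left')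
  also have "\<dots> = 1"
    using assms(1) by (simp add: mod_diff_eq[symmetric])
  finally show ?thesis
    by simp
qed

lemma abs_eq_min_mod:
  fixes v :: int and n :: nat
  assumes "2 * \<bar>v\<bar> \<le> int n"
  shows "\<bar>v\<bar> = int (min (nat (v mod int n)) (n - nat (v mod int n)))"
proof -
  define r where "r = v mod int n"
  have r: "r = (if 0 \<le> v then v else v + int n)"
  proof (cases "0 \<le> v")
    case True
    then show ?thesis
      unfolding r_def using assms by (cases "v = 0") (auto intro: mod_pos_pos_trivial)
  next
    case False
    then have "(v + int n) mod int n = v + int n"
      using assms by (intro mod_pos_pos_trivial) auto
    then show ?thesis
      unfolding r_def using False by simp
  qed
  then have "0 \<le> r" and "r \<le> int n"
    using assms by auto
  then have "int (min (nat r) (n - nat r)) = min r (int n - r)"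
    by (simp add: of_nat_diff)
  also have "\<dots> = \<bar>v\<bar>"
    using r assms by auto
  finally show ?thesis
    unfolding r_def ..
qed

theorem proposition3p9:
  fixes a b :: nat and u v :: int
  assumes "coprime a b" and "1 < a" and "a < b"
    and "definitely_least_solution (int a) (int b) u v"
  shows "int (card {i \<in> {1..a-1}. isolated_gaps_res i a (gen2 a b) \<noteq> {}}) = \<bar>v\<bar>"
proof -
  have bezout: "int a * u + int b * v = 1" and v_small: "2 * \<bar>v\<bar> \<le> int a"
    using assms(4) unfolding definitely_least_solution_def by auto
  define c where "c = nat (v mod int a)"
  have "c < a"
    unfolding c_def using \<open>1 < a\<close> by (simp add: nat_less_iff)
  then interpret inverse_mod_pair a b c
    using \<open>1 < a\<close> \<open>a < b\<close> bezout_coeff_inverse_mod[OF \<open>1 < a\<close> bezout]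
    unfolding c_def by unfold_locales
  have "\<bar>v\<bar> = int (min c (a - c))"
    using abs_eq_min_mod[OF v_small] unfolding c_def .
  then show ?thesis
    by (simp only: card_isolated_gap_residues)
qed

end
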